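(* For every integer $p\ge0$, $$\sum_{k=1}^\infty\frac{(-1)^k}{(2k-1)(2k)^p(2k+1)}=\begin{cases}\dfrac12-\dfrac{\pi}{4}+\displaystyle\sum_{j=1}^{p/2}2^{-2j}\eta(2j), & p\text{ even},\\[8pt] -\dfrac12+\dfrac{\ln 2}{2}+\displaystyle\sum_{j=1}^{(p-1)/2}2^{-(2j+1)}\eta(2j+1), & p\text{ odd},\end{cases}$$ where empty sums are $0$.
   Context: $\eta(s)=\sum_{k\ge1}(-1)^{k+1}k^{-s}$ ($\operatorname{Re}s>0$) is the Dirichlet eta function. *)

theory Defs
  imports "HOL-Analysis.Analysis"
begin

text \<open>Dirichlet eta function for real s > 0:
  eta s = sum over k >= 1 of (-1)^(k+1) k^(-s); here indexed by n = k - 1.\<close>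
definition dirichlet_eta :: "real \<Rightarrow> real" where
  "dirichlet_eta s = (\<Sum>n. (-1) ^ n / (real (Suc n)) powr s)"

end

theory Submission
  imports Defs
begin

text \<open>With \<open>m = 2k\<close> one has
  \<open>1/((m-1) m^(p+2) (m+1)) = 1/((m-1) m^p (m+1)) - 1/m^(p+2)\<close>,
  so passing from \<open>p\<close> to \<open>p + 2\<close> adds \<open>2^-(p+2) \<eta>(p+2)\<close> to the sum.
  For \<open>p = 0\<close> and \<open>p = 1\<close> partial fractions reduce the series to Leibniz's series
  for \<open>\<pi>/4\<close> and to the alternating harmonic series for \<open>ln 2\<close>.\<close>

lemma leibniz_pi_sums: "(\<lambda>k. (-1)^k / real (2*k+1)) sums (pi/4)"
proof -
  have "summable (\<lambda>k. (-1)^k / real (2*k+1))"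
    using summable_arctan_series[of 1] by (simp add: mult.commute)
  then have "(\<lambda>k. (-1)^k / real (2*k+1)) sums (\<Sum>k. (-1)^k / real (2*k+1))"
    by (rule summable_sums)
  also have "(\<Sum>k. (-1)^k / real (2*k+1)) = pi/4"
    using arctan_series[of 1] by (simp add: mult.commute)
  finally show ?thesis .
qed

lemma dirichlet_eta_sums:
  assumes "q \<ge> 2"
  shows "(\<lambda>n. (-1)^n / real (Suc n) ^ q) sums dirichlet_eta (real q)"
proof -
  have "summable (\<lambda>n. inverse (real (Suc n) ^ q))"
    using inverse_power_summable[OF assms, where 'a=real] by (subst summable_Suc_iff)
  moreover have "norm ((-1)^n / real (Suc n) ^ q) = inverse (real (Suc n) ^ q)" for n
    by (simp add: norm_divide norm_power inverse_eq_divide)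
  ultimately have "summable (\<lambda>n. norm ((-1)^n / real (Suc n) ^ q))"
    by simp
  then have "summable (\<lambda>n. (-1)^n / real (Suc n) ^ q)"
    by (rule summable_norm_cancel)
  then show ?thesis
    by (simp add: dirichlet_eta_def powr_realpow summable_sums)
qed

lemma partial_fractions_power_add2:
  fixes m :: "'a::field"
  assumes "m \<noteq> 0" "m - 1 \<noteq> 0" "m + 1 \<noteq> 0"
  shows "1 / ((m - 1) * m ^ (p + 2) * (m + 1)) = 1 / ((m - 1) * m ^ p * (m + 1)) - 1 / m ^ (p + 2)"
  using assms by (simp add: divide_simps) (simp add: algebra_simps)

lemma partial_fractions_two_factors:
  fixes m :: "'a::field_char_0"
  assumes "m - 1 \<noteq> 0" "m + 1 \<noteq> 0"
  shows "1 / ((m - 1) * (m + 1)) = (1 / (m - 1) - 1 / (m + 1)) / 2"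
  using assms by (simp add: divide_simps)

lemma partial_fractions_three_factors:
  fixes m :: "'a::field_char_0"
  assumes "m \<noteq> 0" "m - 1 \<noteq> 0" "m + 1 \<noteq> 0"
  shows "1 / ((m - 1) * m * (m + 1)) = (1 / (m - 1) + 1 / (m + 1)) / 2 - 1 / m"
proof -
  have "(m - 1) * m * (m + 1) \<noteq> 0"
    using assms by simp
  with assms show ?thesis
    by (simp add: field_simps)
qed

definition alt_term :: "nat \<Rightarrow> nat \<Rightarrow> real" where
  "alt_term p n = (-1) ^ Suc n /
     ((2 * real (Suc n) - 1) * (2 * real (Suc n)) ^ p * (2 * real (Suc n) + 1))"

lemma alt_term_add2:
  "alt_term (p + 2) n = alt_term p n + 2 powr (- real (p + 2)) * ((-1)^n / real (Suc n) ^ (p + 2))"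
proof -
  define m where "m = 2 * real (Suc n)"
  have "m > 1"
    by (simp add: m_def)
  have "alt_term q n = (-1) ^ Suc n * (1 / ((m - 1) * m ^ q * (m + 1)))" for q
    by (simp add: alt_term_def m_def)
  then have "alt_term (p + 2) n = alt_term p n - (-1) ^ Suc n / m ^ (p + 2)"
    using partial_fractions_power_add2[of m p] \<open>m > 1\<close>
    by (simp only:) (simp add: right_diff_distrib)
  also have "(-1) ^ Suc n / m ^ (p + 2) = - (1 / 2 ^ (p + 2) * ((-1)^n / real (Suc n) ^ (p + 2)))"
    unfolding m_def power_mult_distrib by simp
  also have "1 / 2 ^ (p + 2) = (2::real) powr (- real (p + 2))"
    by (metis powr_minus_divide powr_realpow zero_less_numeral)
  finally show ?thesis
    by simp
qed

lemma alt_term_add2_sums: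
  assumes "alt_term p sums s"
  shows "alt_term (p + 2) sums (s + 2 powr (- real (p + 2)) * dirichlet_eta (real (p + 2)))"
  unfolding alt_term_add2
  by (intro sums_add assms sums_mult dirichlet_eta_sums) simp

lemma alt_term_0: "alt_term 0 n = (- ((-1)^n / real (2*n+1)) - (-1)^Suc n / real (2*Suc n+1)) / 2"
proof -
  have "alt_term 0 n = (-1) ^ Suc n * (1 / ((2 * real (Suc n) - 1) * (2 * real (Suc n) + 1)))"
    by (simp add: alt_term_def)
  also have "\<dots> = (-1) ^ Suc n * ((1 / real (2*n+1) - 1 / real (2*Suc n+1)) / 2)"
    by (subst partial_fractions_two_factors) simp_all
  finally show ?thesis
    by (simp add: algebra_simps)
qed

lemma alt_term_1:
  "alt_term 1 n =
     (- ((-1)^n / real (2*n+1)) + (-1)^Suc n / real (2*Suc n+1)) / 2 + (-1)^n / real (Suc n) / 2"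
proof -
  have "alt_term 1 n = (-1) ^ Suc n * (1 / ((2 * real (Suc n) - 1) * (2 * real (Suc n)) * (2 * real (Suc n) + 1)))"
    by (simp add: alt_term_def)
  also have "\<dots> = (-1) ^ Suc n * ((1 / real (2*n+1) + 1 / real (2*Suc n+1)) / 2 - 1 / (2 * real (Suc n)))"
    by (subst partial_fractions_three_factors) simp_all
  finally show ?thesis
    by (simp add: algebra_simps)
qed

lemma alt_term_0_sums: "alt_term 0 sums (1/2 - pi/4)"
proof -
  have "(\<lambda>n. (- ((-1)^n / real (2*n+1)) - (-1)^Suc n / real (2*Suc n+1)) / 2)
          sums ((- (pi/4) - (pi/4 - 1)) / 2)"
    using leibniz_pi_sums sums_Suc_iff[of "\<lambda>k. (-1)^k / real (2*k+1)"]
    by (intro sums_divide sums_diff sums_minus) simp_all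
  also have "(- (pi/4) - (pi/4 - 1)) / 2 = 1/2 - pi/4"
    by simp
  finally show ?thesis
    unfolding alt_term_0[abs_def] .
qed

lemma alt_term_1_sums: "alt_term 1 sums (-1/2 + ln 2 / 2)"
proof -
  have "(\<lambda>n. (- ((-1)^n / real (2*n+1)) + (-1)^Suc n / real (2*Suc n+1)) / 2
            + (-1)^n / real (Suc n) / 2)
          sums ((- (pi/4) + (pi/4 - 1)) / 2 + ln 2 / 2)"
    using leibniz_pi_sums sums_Suc_iff[of "\<lambda>k. (-1)^k / real (2*k+1)"]
    by (intro sums_add sums_divide sums_minus alternating_harmonic_series_sums) simp_all
  also have "(- (pi/4) + (pi/4 - 1)) / 2 + ln 2 / 2 = -1/2 + ln 2 / 2"
    by simp
  finally show ?thesis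
    unfolding alt_term_1[abs_def] .
qed

lemma alt_term_even_sums:
  "alt_term (2 * q) sums
     (1/2 - pi/4 + (\<Sum>j=1..q. 2 powr (-(2 * real j)) * dirichlet_eta (2 * real j)))"
proof (induction q)
  case 0
  show ?case
    using alt_term_0_sums by simp
next
  case (Suc q)
  show ?case
    using alt_term_add2_sums[OF Suc.IH] by (simp add: algebra_simps)
qed

lemma alt_term_odd_sums:
  "alt_term (2 * q + 1) sums
     (-1/2 + ln 2 / 2 + (\<Sum>j=1..q. 2 powr (-(2 * real j + 1)) * dirichlet_eta (2 * real j + 1)))"
proof (induction q)
  case 0
  show ?case
    using alt_term_1_sums by simp
next
  case (Suc q)
  show ?case
    using alt_term_add2_sums[OF Suc.IH] by (simp add: algebra_simps)
qed

theorem corollary3: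
  fixes p :: nat
  shows "(\<lambda>n. (-1) ^ Suc n /
            ((2 * real (Suc n) - 1) * (2 * real (Suc n)) ^ p * (2 * real (Suc n) + 1)))
         sums
         (if even p
          then 1/2 - pi/4 + (\<Sum>j=1..p div 2. 2 powr (-(2 * real j)) * dirichlet_eta (2 * real j))
          else -1/2 + ln 2 / 2 +
               (\<Sum>j=1..(p - 1) div 2. 2 powr (-(2 * real j + 1)) * dirichlet_eta (2 * real j + 1)))"
proof (cases "even p")
  case True
  then obtain q where "p = 2 * q" by blast
  then show ?thesis
    using alt_term_even_sums[of q] unfolding alt_term_def[of p, symmetric] by simp
next
  case False
  then obtain q where "p = 2 * q + 1" using oddE by blast
  then show ?thesis
    using alt_term_odd_sums[of q] unfolding alt_term_def[of p, symmetric] by simp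
qed

end
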